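(* Let $u(t)$ be a (twice continuously differentiable in $t$) vector of grid values on the reference grid satisfying the semidiscrete scheme $$J a\,\ddot{u} = \mathbb{D}_{jk}(\alpha_{ijik} b)\,u + \mathrm{SAT},$$ where $\mathrm{SAT}=\mathrm{SAT}(t)$ is an arbitrary vector of grid values (summation over $i,j,k$). Then $$\frac{dE}{dt} = \langle \dot u,\, b D_{\hat n} u\rangle_{\Gamma',h} + \dot u^T H\,\mathrm{SAT}.$$ In particular, with the Neumann penalty $$\mathrm{SAT} = -H^{-1}\sum_{f\in F} e_f\,\gamma\,H_f\, b\,\big(e_f^T D_{\hat n} u - 0\big)$$ (all coefficients evaluated on face $f$, and $D_{\hat n}$ formed with the normal of face $f$), one has $\frac{dE}{dt}=0$, and $E\ge 0$ for all $u,\dot u$.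
   Context: Summation convention: repeated subscript indices are summed from $1$ to $d$ unless "no sum" is stated. Every grid function (coefficient) is identified with the diagonal matrix of its grid values. One-dimensional SBP operators: on an equidistant grid of $N$ points with spacing $h$, let $e_\ell=(1,0,\dots,0)^T$, $e_r=(0,\dots,0,1)^T$, $H_\xi = h\,\mathrm{diag}(w_1,\dots,w_s,1,\dots,1,w_s,\dots,w_1)$ with all $w_i>0$, and $\theta_H:=w_1$. $D_\xi$ is an $N\times N$ matrix with $H_\xi D_\xi + D_\xi^T H_\xi = -e_\ell e_\ell^T + e_r e_r^T$; $\hat D_\xi$ is another $N\times N$ matrix and $\Delta D_\xi = D_\xi-\hat D_\xi$. For each grid function $c$, $D_{\xi\xi}(c)$ and $R_{\xi\xi}(c)$ are $N\times N$ matrices with $H_\xi D_{\xi\xi}(c) = -D_\xi^T H_\xi c D_\xi - R_{\xi\xi}(c) - e_\ell c_\ell e_\ell^T \hat D_\xi + e_r c_r e_r^T\hat D_\xi$ ($c_\ell,c_r$ the endpoint values of $c$), where $R_{\xi\xi}(c)$ depends linearly on $c$ and is symmetric positive semidefinite whenever $c\ge 0$ entrywise. Multi-dimensional operators: the reference domain $\Omega=[0,1]^d$ carries the tensor-product grid with $N$ points and spacing $h$ in each direction. $D_i$, $\hat D_i$, $H_i$ are the Kronecker products $I\otimes\cdots\otimes X\otimes\cdots\otimes I$ with $X=D_\xi,\hat D_\xi,H_\xi$ respectively in the $i$th factor; $\Delta D_i=D_i-\hat D_i$; $H=H_\xi\otimes\cdots\otimes H_\xi$ ($d$ factors). For a grid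 function $c$, $D_{ii}(c)$ (resp. $\widetilde R_{ii}(c)$) applies $D_{\xi\xi}$ (resp. $R_{\xi\xi}$), with $c$ restricted to the line, along every grid line in direction $i$, and $R_{ii}(c)=H_i^{-1}H\widetilde R_{ii}(c)$. Define $\mathbb D_{jk}(c)=D_{jj}(c)$ if $j=k$ and $\mathbb D_{jk}(c)=D_j c D_k$ if $j\ne k$. Faces: $\Gamma_i^-=\{\xi_i=0\}$, $\Gamma_i^+=\{\xi_i=1\}$, $F$ the set of all $2d$ faces. For $f\in F$, $e_f$ is the restriction matrix such that $e_f^Tu$ is the vector of values of $u$ at the grid points of $f$; for $f=\Gamma_i^\pm$, $H_f$ is the Kronecker product of $d-1$ copies of $H_\xi$ (direction $i$ omitted), and $\nu=(\nu_1,\dots,\nu_d)$ is the outward unit normal of $f$ in reference coordinates ($\nu_i=\pm1$, other components $0$). Discrete forms: $\langle u,v\rangle_{\Omega,h}=u^THv$, $\langle u,v\rangle_{\Gamma,h}=\sum_{f\in F}(e_f^Tu)^TH_f(e_f^Tv)$, where in the term for face $f$ every occurrence of $\nu$ or of face-dependent quantities refers to face $f$ (also at edge and corner points); $\|u\|^2_{\Omega,h}=\langle u,u\rangle_{\Omega,h}$, $\|u\|^2_{\Gamma,h}=\langle u,u\rangle_{\Gamma,h}$. Geometry and coefficients: a smooth bijection $\vec x(\vec\xi)$ from $\Omega$ onto the physical domain $\Omega'$; $\mathcal J_{ij}=\partial x_j/\partial\xi_i$, $J=\det\mathcal J>0$, $\mathcal K_{ij}=\partial\xi_j/\partial x_i$;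 $\gamma>0$ on $\partial\Omega$ is defined by $d\Gamma'=\gamma\,d\Gamma$ (surface element ratio); $a>0$, $b>0$ are coefficient functions; all are evaluated at grid points and regarded as diagonal matrices. $\alpha_{ijkl}=\mathcal K_{ij}J\mathcal K_{kl}$. Physical forms: $\langle u,v\rangle_{\Omega',h}=\langle u,Jv\rangle_{\Omega,h}$, $\langle u,v\rangle_{\Gamma',h}=\langle u,\gamma v\rangle_{\Gamma,h}$, with associated squared (semi)norms. $D_{x_i}=\mathcal K_{ij}D_j$. The discrete normal derivative (used at boundary points, face by face) is $D_{\hat n}=\nu_j\frac{\alpha_{ijik}}{\gamma}D_k-\sum_k\nu_k\frac{\alpha_{ikik}}{\gamma}\Delta D_k$. Let $\eta_k=\alpha_{ikik}b$ (sum over $i$, no sum over $k$). The discrete energy is $$E=\tfrac12\|\sqrt a\,\dot u\|^2_{\Omega',h}+\tfrac12\sum_i\|\sqrt b\,D_{x_i}u\|^2_{\Omega',h}+\tfrac12\sum_k u^TR_{kk}(\eta_k)u.$$ All coefficients are time-independent. *)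

theory Defs
  imports Complex_Main
begin

text \<open>Directions are numbered 0,...,d-1 (the paper uses 1,...,d); grid
indices in each direction are 0,...,N-1.  A grid point of the tensor-product grid on
[0,1]^d is a function p :: nat => nat with p i < N for i < d and p i = 0 for i >= d.
Grid functions are functions on grid points; matrices over the grid are functions of
two grid points (only their values on the grid matter).  One-dimensional matrices are
functions nat => nat => real, only entries with indices < N matter.\<close>

type_synonym gpt = "nat \<Rightarrow> nat"
type_synonym gfun = "gpt \<Rightarrow> real"
type_synonym gmat = "gpt \<Rightarrow> gpt \<Rightarrow> real"
type_synonym mat1 = "nat \<Rightarrow> nat \<Rightarrow> real"
type_synonym face = "nat \<times> bool"   \<comment> \<open>(i, False) = Gamma_i^-, (i, True) = Gamma_i^+\<close>

definition grid :: "nat \<Rightarrow> nat \<Rightarrow> gpt set" where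
  "grid d N = {p. (\<forall>i<d. p i < N) \<and> (\<forall>i. d \<le> i \<longrightarrow> p i = 0)}"

definition sbp_norm :: "nat \<Rightarrow> real \<Rightarrow> mat1 \<Rightarrow> bool" where
  "sbp_norm N h Hx \<longleftrightarrow> (\<exists>s w. 2 * s \<le> N \<and> (\<forall>k<s. (0::real) < w k) \<and>
     (\<forall>k<N. \<forall>l<N. Hx k l = (if k = l then h * (if k < s then w k
                                           else if N - 1 - k < s then w (N - 1 - k) else 1)
                               else 0)))"

definition sbp_first :: "nat \<Rightarrow> mat1 \<Rightarrow> mat1 \<Rightarrow> bool" where
  "sbp_first N Hx D \<longleftrightarrow> (\<forall>k<N. \<forall>l<N.
     (\<Sum>m<N. Hx k m * D m l) + (\<Sum>m<N. D m k * Hx m l)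
       = (if k = 0 \<and> l = 0 then -1 else 0) + (if k = N - 1 \<and> l = N - 1 then 1 else 0))"

definition sbp_second :: "nat \<Rightarrow> mat1 \<Rightarrow> mat1 \<Rightarrow> mat1 \<Rightarrow> ((nat \<Rightarrow> real) \<Rightarrow> mat1)
                         \<Rightarrow> ((nat \<Rightarrow> real) \<Rightarrow> mat1) \<Rightarrow> bool" where
  "sbp_second N Hx D Dh Dxx R \<longleftrightarrow> (\<forall>c. \<forall>k<N. \<forall>l<N.
     (\<Sum>m<N. Hx k m * Dxx c m l)
       = - (\<Sum>m<N. \<Sum>n<N. D m k * Hx m n * c n * D n l) - R c k l
         - (if k = 0 then c 0 * Dh 0 l else 0)
         + (if k = N - 1 then c (N - 1) * Dh (N - 1) l else 0))"

definition rem_linear :: "nat \<Rightarrow> ((nat \<Rightarrow> real) \<Rightarrow> mat1) \<Rightarrow> bool" where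
  "rem_linear N R \<longleftrightarrow> (\<forall>c1 c2 x y. \<forall>k<N. \<forall>l<N.
     R (\<lambda>m. x * c1 m + y * c2 m) k l = x * R c1 k l + y * R c2 k l)"

definition rem_psd :: "nat \<Rightarrow> ((nat \<Rightarrow> real) \<Rightarrow> mat1) \<Rightarrow> bool" where
  "rem_psd N R \<longleftrightarrow> (\<forall>c. (\<forall>m<N. 0 \<le> c m) \<longrightarrow>
     (\<forall>k<N. \<forall>l<N. R c k l = R c l k) \<and>
     (\<forall>v. 0 \<le> (\<Sum>k<N. \<Sum>l<N. v k * R c k l * v l)))"

definition dg :: "gfun \<Rightarrow> gmat" where
  "dg c p q = (if p = q then c p else 0)"

definition mmul :: "gpt set \<Rightarrow> gmat \<Rightarrow> gmat \<Rightarrow> gmat" where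
  "mmul G A B p q = (\<Sum>r\<in>G. A p r * B r q)"

definition mvec :: "gpt set \<Rightarrow> gmat \<Rightarrow> gfun \<Rightarrow> gfun" where
  "mvec G A v p = (\<Sum>q\<in>G. A p q * v q)"

definition dinv :: "gmat \<Rightarrow> gmat" where
  "dinv A p q = (if p = q then 1 / A p p else 0)"

text \<open>I x ... x X x ... x I with X in the i-th factor.\<close>
definition kdir :: "nat \<Rightarrow> mat1 \<Rightarrow> gmat" where
  "kdir i X p q = (if (\<forall>j. j \<noteq> i \<longrightarrow> p j = q j) then X (p i) (q i) else 0)"

text \<open>X x ... x X (d factors).\<close>
definition kall :: "nat \<Rightarrow> mat1 \<Rightarrow> gmat" where
  "kall d X p q = (\<Prod>j<d. X (p j) (q j))"

definition gline :: "nat \<Rightarrow> nat \<Rightarrow> gfun \<Rightarrow> gpt \<Rightarrow> nat \<Rightarrow> real" where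
  "gline N i c p k = (if k < N then c (p(i := k)) else 0)"

text \<open>Apply the one-dimensional coefficient-dependent operator Op(c) along every grid line in
  direction i (c restricted to the line).\<close>
definition dline :: "nat \<Rightarrow> nat \<Rightarrow> ((nat \<Rightarrow> real) \<Rightarrow> mat1) \<Rightarrow> gfun \<Rightarrow> gmat" where
  "dline N i Op c p q = (if (\<forall>j. j \<noteq> i \<longrightarrow> p j = q j) then Op (gline N i c p) (p i) (q i) else 0)"

definition Rdir :: "nat \<Rightarrow> nat \<Rightarrow> mat1 \<Rightarrow> ((nat \<Rightarrow> real) \<Rightarrow> mat1) \<Rightarrow> nat \<Rightarrow> gfun \<Rightarrow> gmat" where
  "Rdir d N Hx R i c = mmul (grid d N) (mmul (grid d N) (dinv (kdir i Hx)) (kall d Hx)) (dline N i R c)"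

definition DDjk :: "nat \<Rightarrow> nat \<Rightarrow> mat1 \<Rightarrow> ((nat \<Rightarrow> real) \<Rightarrow> mat1) \<Rightarrow> nat \<Rightarrow> nat \<Rightarrow> gfun \<Rightarrow> gmat" where
  "DDjk d N D Dxx j k c = (if j = k then dline N j Dxx c
      else mmul (grid d N) (mmul (grid d N) (kdir j D) (dg c)) (kdir k D))"

definition faces :: "nat \<Rightarrow> face set" where
  "faces d = {..<d} \<times> UNIV"

definition facepts :: "nat \<Rightarrow> nat \<Rightarrow> face \<Rightarrow> gpt set" where
  "facepts d N f = {p \<in> grid d N. p (fst f) = (if snd f then N - 1 else 0)}"

text \<open>Restriction matrix e_f (rows: grid points, columns: points of face f).\<close>
definition ef :: "nat \<Rightarrow> nat \<Rightarrow> face \<Rightarrow> gmat" where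
  "ef d N f p q = (if p = q \<and> q \<in> facepts d N f then 1 else 0)"

definition ftr :: "nat \<Rightarrow> nat \<Rightarrow> face \<Rightarrow> gfun \<Rightarrow> gfun" where
  "ftr d N f u q = (\<Sum>p\<in>grid d N. ef d N f p q * u p)"

definition fext :: "nat \<Rightarrow> nat \<Rightarrow> face \<Rightarrow> gfun \<Rightarrow> gfun" where
  "fext d N f w p = (\<Sum>q\<in>facepts d N f. ef d N f p q * w q)"

text \<open>H_f: Kronecker product of d-1 copies of H_xi, direction fst f omitted.\<close>
definition Hf :: "nat \<Rightarrow> mat1 \<Rightarrow> face \<Rightarrow> gmat" where
  "Hf d Hx f p q = (\<Prod>j\<in>{..<d} - {fst f}. Hx (p j) (q j))"

definition nu :: "face \<Rightarrow> nat \<Rightarrow> real" where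
  "nu f j = (if j = fst f then (if snd f then 1 else -1) else 0)"

definition bform :: "nat \<Rightarrow> nat \<Rightarrow> mat1 \<Rightarrow> (face \<Rightarrow> gfun) \<Rightarrow> (face \<Rightarrow> gfun) \<Rightarrow> real" where
  "bform d N Hx U V = (\<Sum>f\<in>faces d. \<Sum>q\<in>facepts d N f. \<Sum>q'\<in>facepts d N f.
       ftr d N f (U f) q * Hf d Hx f q q' * ftr d N f (V f) q')"

text \<open>Physical boundary form <u,v>_{Gamma',h} = <u, gamma v>_{Gamma,h}.\<close>
definition bformP :: "nat \<Rightarrow> nat \<Rightarrow> mat1 \<Rightarrow> (face \<Rightarrow> gfun) \<Rightarrow> (face \<Rightarrow> gfun) \<Rightarrow> (face \<Rightarrow> gfun) \<Rightarrow> real" where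
  "bformP d N Hx gam U V = bform d N Hx U (\<lambda>f p. gam f p * V f p)"

definition qf :: "gpt set \<Rightarrow> gfun \<Rightarrow> gmat \<Rightarrow> gfun \<Rightarrow> real" where
  "qf G u A v = (\<Sum>p\<in>G. \<Sum>q\<in>G. u p * A p q * v q)"

text \<open>Physical volume form <u,v>_{Omega',h} = <u, J v>_{Omega,h} = u^T H J v.\<close>
definition vformP :: "nat \<Rightarrow> nat \<Rightarrow> mat1 \<Rightarrow> gfun \<Rightarrow> gfun \<Rightarrow> gfun \<Rightarrow> real" where
  "vformP d N Hx J u v = qf (grid d N) u (kall d Hx) (\<lambda>p. J p * v p)"

definition Dx :: "nat \<Rightarrow> nat \<Rightarrow> mat1 \<Rightarrow> (nat \<Rightarrow> nat \<Rightarrow> gfun) \<Rightarrow> nat \<Rightarrow> gfun \<Rightarrow> gfun" where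
  "Dx d N D K i u p = (\<Sum>j<d. K i j p * mvec (grid d N) (kdir j D) u p)"

definition alpha :: "(nat \<Rightarrow> nat \<Rightarrow> gfun) \<Rightarrow> gfun \<Rightarrow> nat \<Rightarrow> nat \<Rightarrow> nat \<Rightarrow> nat \<Rightarrow> gfun" where
  "alpha K J i j k l p = K i j p * J p * K k l p"

definition Dn :: "nat \<Rightarrow> nat \<Rightarrow> mat1 \<Rightarrow> mat1 \<Rightarrow> (nat \<Rightarrow> nat \<Rightarrow> gfun) \<Rightarrow> gfun \<Rightarrow> (face \<Rightarrow> gfun)
                 \<Rightarrow> face \<Rightarrow> gfun \<Rightarrow> gfun" where
  "Dn d N D Dh K J gam f u p =
     (\<Sum>i<d. \<Sum>j<d. \<Sum>k<d. nu f j * alpha K J i j i k p / gam f p * mvec (grid d N) (kdir k D) u p)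
     - (\<Sum>k<d. nu f k * (\<Sum>i<d. alpha K J i k i k p) / gam f p
              * mvec (grid d N) (kdir k (\<lambda>m n. D m n - Dh m n)) u p)"

definition eta :: "nat \<Rightarrow> (nat \<Rightarrow> nat \<Rightarrow> gfun) \<Rightarrow> gfun \<Rightarrow> gfun \<Rightarrow> nat \<Rightarrow> gfun" where
  "eta d K J b k p = (\<Sum>i<d. alpha K J i k i k p) * b p"

definition energy :: "nat \<Rightarrow> nat \<Rightarrow> mat1 \<Rightarrow> mat1 \<Rightarrow> ((nat \<Rightarrow> real) \<Rightarrow> mat1)
     \<Rightarrow> (nat \<Rightarrow> nat \<Rightarrow> gfun) \<Rightarrow> gfun \<Rightarrow> gfun \<Rightarrow> gfun \<Rightarrow> gfun \<Rightarrow> gfun \<Rightarrow> real" where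
  "energy d N Hx D R K J a b u v =
     1/2 * vformP d N Hx J (\<lambda>p. sqrt (a p) * v p) (\<lambda>p. sqrt (a p) * v p)
   + 1/2 * (\<Sum>i<d. vformP d N Hx J (\<lambda>p. sqrt (b p) * Dx d N D K i u p)
                                    (\<lambda>p. sqrt (b p) * Dx d N D K i u p))
   + 1/2 * (\<Sum>k<d. qf (grid d N) u (Rdir d N Hx R k (eta d K J b k)) u)"

definition scheme_rhs :: "nat \<Rightarrow> nat \<Rightarrow> mat1 \<Rightarrow> ((nat \<Rightarrow> real) \<Rightarrow> mat1)
     \<Rightarrow> (nat \<Rightarrow> nat \<Rightarrow> gfun) \<Rightarrow> gfun \<Rightarrow> gfun \<Rightarrow> gfun \<Rightarrow> gfun" where
  "scheme_rhs d N D Dxx K J b u p = (\<Sum>j<d. \<Sum>k<d.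
      mvec (grid d N) (DDjk d N D Dxx j k (\<lambda>q. (\<Sum>i<d. alpha K J i j i k q) * b q)) u p)"

definition sat_neumann :: "nat \<Rightarrow> nat \<Rightarrow> mat1 \<Rightarrow> mat1 \<Rightarrow> mat1 \<Rightarrow> (nat \<Rightarrow> nat \<Rightarrow> gfun) \<Rightarrow> gfun
     \<Rightarrow> gfun \<Rightarrow> (face \<Rightarrow> gfun) \<Rightarrow> gfun \<Rightarrow> gfun" where
  "sat_neumann d N Hx D Dh K J b gam u p =
     - mvec (grid d N) (dinv (kall d Hx))
         (\<lambda>q. \<Sum>f\<in>faces d. fext d N f
               (\<lambda>r. gam f r * (\<Sum>r'\<in>facepts d N f. Hf d Hx f r r' *
                    (b r' * (ftr d N f (Dn d N D Dh K J gam f u) r' - 0)))) q) p"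

end

theory Submission
  imports Defs "HOL-Library.FuncSet"
begin

text \<open>The discrete argument mirrors the continuous energy estimate. Multiplying the scheme by
  u'^T H, the SBP identities of D_xi and D_xixi(c), applied along every grid line, turn
  u'^T H DD_jk(alpha_ijik b) u into minus the interior form sum_jk (D_j u')^T H alpha_ijik b (D_k u),
  minus the remainder forms u'^T R_kk(eta_k) u, plus boundary terms. Because
  alpha_ijik = K_ij J K_ik, the interior form is sum_i <D_x_i u', b D_x_i u>_Omega', so interior and
  remainder terms cancel the time derivative of the potential part of E (R_kk(eta_k) is symmetric),
  leaving u'^T H SAT. The boundary terms, collected face by face, are <u', b D_n u>_Gamma': the
  surface weight gamma cancels the 1/gamma in D_n. The Neumann penalty is -H^-1 times exactly this
  boundary form, so dE/dt = 0, and E >= 0 since H, J, a, b > 0 and R_kk(eta_k) is positive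
  semidefinite for eta_k >= 0.\<close>

lemma finite_grid: "finite (grid d N)"
proof -
  have "grid d N \<subseteq> (\<lambda>f i. if i < d then f i else 0) ` PiE {..<d} (\<lambda>_. {..<N})"
  proof
    fix p assume p: "p \<in> grid d N"
    show "p \<in> (\<lambda>f i. if i < d then f i else 0) ` PiE {..<d} (\<lambda>_. {..<N})"
    proof
      show "p = (\<lambda>i. if i < d then restrict p {..<d} i else 0)"
        using p by (auto simp: grid_def fun_eq_iff)
      show "restrict p {..<d} \<in> PiE {..<d} (\<lambda>_. {..<N})" using p by (auto simp: grid_def)
    qed
  qed
  then show ?thesis by (rule finite_subset) (auto intro: finite_PiE)
qed

lemma grid_upd: "p \<in> grid d N \<Longrightarrow> j < d \<Longrightarrow> m < N \<Longrightarrow> p(j := m) \<in> grid d N"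
  by (auto simp: grid_def)

lemma grid_less: "p \<in> grid d N \<Longrightarrow> j < d \<Longrightarrow> p j < N"
  by (auto simp: grid_def)

definition grid_base :: "nat \<Rightarrow> nat \<Rightarrow> nat \<Rightarrow> gpt set" where
  "grid_base d N j = {p \<in> grid d N. p j = 0}"

lemma sum_grid_by_lines:
  assumes "j < d" "0 < N"
  shows "(\<Sum>p\<in>grid d N. F p) = (\<Sum>p\<in>grid_base d N j. \<Sum>m<N. F (p(j := m)))"
proof -
  have "(\<Sum>p\<in>grid_base d N j. \<Sum>m<N. F (p(j := m)))
      = (\<Sum>pm\<in>grid_base d N j \<times> {..<N}. F ((fst pm)(j := snd pm)))"
    by (simp add: sum.cartesian_product split_def)
  also have "\<dots> = (\<Sum>p\<in>grid d N. F p)"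
    by (rule sum.reindex_bij_witness[where i = "\<lambda>p. (p(j := 0), p j)" and j = "\<lambda>pm. (fst pm)(j := snd pm)"])
       (use assms in \<open>auto simp: grid_base_def grid_def\<close>)
  finally show ?thesis by simp
qed

lemma sum_grid_base_shift:
  assumes "j < d" "e < N"
  shows "(\<Sum>p\<in>grid_base d N j. F (p(j := e))) = (\<Sum>q\<in>{q \<in> grid d N. q j = e}. F q)"
  by (rule sum.reindex_bij_witness[where i = "\<lambda>q. q(j := 0)" and j = "\<lambda>p. p(j := e)"])
     (use assms in \<open>auto simp: grid_base_def grid_def\<close>)

lemma sum_grid_line_through:
  assumes "p \<in> grid d N" "j < d"
  shows "(\<Sum>q\<in>grid d N. if \<forall>l. l \<noteq> j \<longrightarrow> p l = q l then F q else 0) = (\<Sum>m<N. F (p(j := m)))"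
proof -
  let ?L = "(\<lambda>m. p(j := m)) ` {..<N}"
  have line: "q \<in> ?L" if "q \<in> grid d N" "\<forall>l. l \<noteq> j \<longrightarrow> p l = q l" for q
  proof
    show "q = p(j := q j)" using that by (auto simp: fun_eq_iff)
  qed (use that assms in \<open>auto simp: grid_def\<close>)
  have "(\<Sum>q\<in>grid d N. if \<forall>l. l \<noteq> j \<longrightarrow> p l = q l then F q else 0)
      = (\<Sum>q\<in>?L. if \<forall>l. l \<noteq> j \<longrightarrow> p l = q l then F q else 0)"
    by (rule sum.mono_neutral_right[OF finite_grid]) (use assms line in \<open>auto simp: grid_def\<close>)
  also have "\<dots> = (\<Sum>m<N. F (p(j := m)))"
    by (subst sum.reindex) (auto simp: inj_on_def fun_eq_iff dest: fun_cong[where x = j])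
  finally show ?thesis .
qed

lemma sum_faces: "(\<Sum>f\<in>faces d. F f) = (\<Sum>j<d. F (j, True) + F (j, False))"
proof -
  have "(\<Sum>f\<in>faces d. F f) = (\<Sum>j<d. \<Sum>s\<in>UNIV. F (j, s))"
    unfolding faces_def by (simp add: sum.cartesian_product)
  then show ?thesis by (simp add: UNIV_bool add.commute)
qed

lemma sum_sum_if_row:
  "a < (N::nat) \<Longrightarrow> (\<Sum>k<N. \<Sum>l<N. x k * z l * (if k = a then g l else 0)) = x a * (\<Sum>l<N. z l * (g l :: real))"
proof -
  assume a: "a < N"
  have "(\<Sum>l<N. x k * z l * (if k = a then g l else 0)) = (if k = a then x a * (\<Sum>l<N. z l * g l) else 0)" for k
    by (cases "k = a") (simp_all add: sum_distrib_left mult_ac)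
  then show ?thesis using a by simp
qed

lemma sum_bilinear_rank_one_expand:
  "(\<Sum>k<N. \<Sum>l<N. x k * z l * (\<Sum>m<M. w m * A m k * B m l))
     = (\<Sum>m<M. w m * (\<Sum>k<N. A m k * x k) * (\<Sum>l<N. B m l * (z l :: real)))"
proof -
  have "(\<Sum>m<M. w m * (\<Sum>k<N. A m k * x k) * (\<Sum>l<N. B m l * z l))
      = (\<Sum>m<M. \<Sum>k<N. \<Sum>l<N. x k * z l * (w m * A m k * B m l))"
    by (simp add: mult.assoc sum_product sum_distrib_left mult_ac)
  also have "\<dots> = (\<Sum>k<N. \<Sum>m<M. \<Sum>l<N. x k * z l * (w m * A m k * B m l))"
    by (rule sum.swap)
  also have "\<dots> = (\<Sum>k<N. \<Sum>l<N. \<Sum>m<M. x k * z l * (w m * A m k * B m l))"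
    by (intro sum.cong refl sum.swap)
  finally show ?thesis by (simp add: sum_distrib_left)
qed

lemma sum_replace_term: "j < (d::nat) \<Longrightarrow> (\<Sum>k<d. if j = k then A else B k) = (\<Sum>k<d. B k) - B j + (A::real)"
proof -
  assume j: "j < d"
  have "(\<Sum>k<d. if j = k then A else B k) = (\<Sum>k<d. B k + (if k = j then A - B j else 0))"
    by (rule sum.cong) auto
  then show ?thesis using j by (simp add: sum.distrib)
qed

lemma sum_nu: "j < d \<Longrightarrow> (\<Sum>j'<d. nu (j, s) j' * F j') = (if s then 1 else -1) * F j"
proof -
  assume j: "j < d"
  have "(\<Sum>j'<d. nu (j, s) j' * F j') = (\<Sum>j'<d. if j' = j then (if s then 1 else -1) * F j else 0)"
    by (rule sum.cong) (auto simp: nu_def)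
  then show ?thesis using j by simp
qed

lemma mvec_mmul_dg:
  assumes "finite G"
  shows "mvec G (mmul G (mmul G A (dg c)) B) y p = mvec G A (\<lambda>q. c q * mvec G B y q) p"
proof -
  have m1: "mmul G A (dg c) p r = A p r * c r" if "r \<in> G" for p r
  proof -
    have "mmul G A (dg c) p r = (\<Sum>s\<in>G. if s = r then A p r * c r else 0)"
      unfolding mmul_def dg_def by (rule sum.cong) auto
    then show ?thesis using assms that by simp
  qed
  have "mvec G (mmul G (mmul G A (dg c)) B) y p = (\<Sum>q\<in>G. (\<Sum>r\<in>G. A p r * c r * B r q) * y q)"
    unfolding mvec_def mmul_def by (intro sum.cong refl) (simp add: m1[unfolded mmul_def])
  also have "\<dots> = (\<Sum>q\<in>G. \<Sum>r\<in>G. A p r * c r * B r q * y q)"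
    by (simp add: sum_distrib_right)
  also have "\<dots> = (\<Sum>r\<in>G. \<Sum>q\<in>G. A p r * c r * B r q * y q)"
    by (rule sum.swap)
  also have "\<dots> = mvec G A (\<lambda>q. c q * mvec G B y q) p"
    unfolding mvec_def by (simp add: sum_distrib_left mult_ac)
  finally show ?thesis .
qed

lemma qf_symmetric_has_derivative:
  assumes sym: "\<forall>p\<in>G. \<forall>q\<in>G. A p q = A q p"
    and du: "\<forall>q\<in>G. ((\<lambda>s. u s q) has_real_derivative u' q) (at t)"
  shows "((\<lambda>s. qf G (u s) A (u s)) has_real_derivative 2 * qf G u' A (u t)) (at t)"
proof (rule DERIV_cong)
  show "((\<lambda>s. qf G (u s) A (u s)) has_real_derivative
       (\<Sum>p\<in>G. \<Sum>q\<in>G. u' p * A p q * u t q + u t p * A p q * u' q)) (at t)"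
    unfolding qf_def
  proof (intro DERIV_sum)
    fix p q assume p: "p \<in> G" and q: "q \<in> G"
    show "((\<lambda>s. u s p * A p q * u s q) has_real_derivative u' p * A p q * u t q + u t p * A p q * u' q) (at t)"
      using DERIV_mult[OF DERIV_cmult_right[OF du[rule_format, OF p], of "A p q"] du[rule_format, OF q]]
      by (simp add: algebra_simps)
  qed
  have "(\<Sum>p\<in>G. \<Sum>q\<in>G. u t p * A p q * u' q) = (\<Sum>q\<in>G. \<Sum>p\<in>G. u' q * A q p * u t p)"
    by (subst sum.swap) (intro sum.cong refl, simp add: sym mult_ac)
  then show "(\<Sum>p\<in>G. \<Sum>q\<in>G. u' p * A p q * u t q + u t p * A p q * u' q) = 2 * qf G u' A (u t)"
    by (simp add: sum.distrib qf_def)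
qed

lemma half_weighted_sum_squares_has_derivative:
  assumes "\<forall>p\<in>S. ((\<lambda>s. f s p) has_real_derivative f' p) (at t)"
  shows "((\<lambda>s. 1/2 * (\<Sum>p\<in>S. w p * (f s p * f s p))) has_real_derivative (\<Sum>p\<in>S. w p * (f' p * f t p))) (at t)"
proof (rule DERIV_cong)
  show "((\<lambda>s. 1/2 * (\<Sum>p\<in>S. w p * (f s p * f s p))) has_real_derivative
          1/2 * (\<Sum>p\<in>S. w p * (f' p * f t p + f' p * f t p))) (at t)"
    using assms by (intro DERIV_cmult DERIV_sum DERIV_mult) auto
  show "1/2 * (\<Sum>p\<in>S. w p * (f' p * f t p + f' p * f t p)) = (\<Sum>p\<in>S. w p * (f' p * f t p))"
    by (simp add: sum_distrib_left algebra_simps)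
qed

section \<open>One-dimensional summation by parts\<close>

locale diag_sbp =
  fixes d N :: nat and Hx D Dh :: mat1 and Dxx R :: "(nat \<Rightarrow> real) \<Rightarrow> mat1"
  assumes N_ge_2: "2 \<le> N"
    and Hx_offdiag: "\<And>k l. k < N \<Longrightarrow> l < N \<Longrightarrow> k \<noteq> l \<Longrightarrow> Hx k l = 0"
    and Hx_pos: "\<And>k. k < N \<Longrightarrow> 0 < Hx k k"
    and D_sbp: "sbp_first N Hx D"
    and Dxx_sbp: "sbp_second N Hx D Dh Dxx R"
    and R_psd: "rem_psd N R"
begin

lemma sum_Hx_row: "k < N \<Longrightarrow> (\<Sum>m<N. Hx k m * f m) = Hx k k * f k"
proof -
  assume k: "k < N"
  have "(\<Sum>m<N. Hx k m * f m) = (\<Sum>m<N. if m = k then Hx k k * f k else 0)"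
    by (rule sum.cong) (use k Hx_offdiag[of k] in auto)
  then show ?thesis using k by simp
qed

lemma sum_Hx_col: "l < N \<Longrightarrow> (\<Sum>m<N. f m * Hx m l) = f l * Hx l l"
proof -
  assume l: "l < N"
  have "(\<Sum>m<N. f m * Hx m l) = (\<Sum>m<N. if m = l then f l * Hx l l else 0)"
    by (rule sum.cong) (use l Hx_offdiag[of _ l] in auto)
  then show ?thesis using l by simp
qed

lemma R_symmetric: "\<forall>m<N. 0 \<le> c m \<Longrightarrow> k < N \<Longrightarrow> l < N \<Longrightarrow> R c k l = R c l k"
  using R_psd unfolding rem_psd_def by blast

lemma R_form_nonneg: "\<forall>m<N. 0 \<le> c m \<Longrightarrow> 0 \<le> (\<Sum>k<N. \<Sum>l<N. v k * R c k l * v l)"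
  using R_psd unfolding rem_psd_def by blast

lemma sbp_sum_by_parts:
  "(\<Sum>k<N. Hx k k * x k * (\<Sum>l<N. D k l * z l))
     = - (\<Sum>l<N. Hx l l * (\<Sum>k<N. D l k * x k) * z l) + x (N - 1) * z (N - 1) - x 0 * z 0"
proof -
  have entry: "Hx k k * D k l + D l k * Hx l l
      = (if k = 0 then if l = 0 then -1 else 0 else 0) + (if k = N - 1 then if l = N - 1 then 1 else 0 else 0)"
    if "k < N" "l < N" for k l
    using D_sbp[unfolded sbp_first_def, rule_format, OF that] sum_Hx_row[OF that(1)] sum_Hx_col[OF that(2)]
    by simp
  have "(\<Sum>k<N. Hx k k * x k * (\<Sum>l<N. D k l * z l)) + (\<Sum>l<N. Hx l l * (\<Sum>k<N. D l k * x k) * z l)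
      = (\<Sum>k<N. \<Sum>l<N. x k * z l * (Hx k k * D k l)) + (\<Sum>l<N. \<Sum>k<N. x k * z l * (D l k * Hx l l))"
    by (simp add: sum_distrib_left sum_distrib_right mult_ac)
  also have "\<dots> = (\<Sum>k<N. \<Sum>l<N. x k * z l * (Hx k k * D k l + D l k * Hx l l))"
    by (subst (2) sum.swap) (simp add: distrib_left sum.distrib)
  also have "\<dots> = (\<Sum>k<N. \<Sum>l<N. x k * z l * (if k = 0 then if l = 0 then -1 else 0 else 0)
                                  + x k * z l * (if k = N - 1 then if l = N - 1 then 1 else 0 else 0))"
    by (intro sum.cong refl) (simp add: entry distrib_left)
  also have "\<dots> = x (N - 1) * z (N - 1) - x 0 * z 0"
    using N_ge_2 by (simp add: sum.distrib sum_sum_if_row if_distrib[of "times (z _)"] cong: if_cong)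
  finally show ?thesis by linarith
qed

lemma sbp_sum_by_parts_second:
  "(\<Sum>k<N. Hx k k * x k * (\<Sum>l<N. Dxx c k l * z l))
     = - (\<Sum>m<N. Hx m m * c m * (\<Sum>k<N. D m k * x k) * (\<Sum>l<N. D m l * z l))
       - (\<Sum>k<N. \<Sum>l<N. x k * R c k l * z l)
       - x 0 * c 0 * (\<Sum>l<N. Dh 0 l * z l) + x (N - 1) * c (N - 1) * (\<Sum>l<N. Dh (N - 1) l * z l)"
  (is "_ = ?R")
proof -
  have entry: "Hx k k * Dxx c k l = - (\<Sum>m<N. Hx m m * c m * D m k * D m l) - R c k l
       - (if k = 0 then c 0 * Dh 0 l else 0) + (if k = N - 1 then c (N - 1) * Dh (N - 1) l else 0)"
    if "k < N" "l < N" for k l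
  proof -
    have "(\<Sum>n<N. D m k * Hx m n * c n * D n l) = Hx m m * c m * D m k * D m l" if "m < N" for m
    proof -
      have "(\<Sum>n<N. D m k * Hx m n * c n * D n l) = D m k * (\<Sum>n<N. Hx m n * (c n * D n l))"
        by (simp add: sum_distrib_left mult.assoc)
      also have "\<dots> = D m k * (Hx m m * (c m * D m l))"
        by (simp only: sum_Hx_row[OF that])
      finally show ?thesis by (simp add: mult_ac)
    qed
    then show ?thesis
      using Dxx_sbp[unfolded sbp_second_def, rule_format, OF that, of c] sum_Hx_row[OF that(1), of "\<lambda>m. Dxx c m l"]
      by simp
  qed
  have "(\<Sum>k<N. Hx k k * x k * (\<Sum>l<N. Dxx c k l * z l)) = (\<Sum>k<N. \<Sum>l<N. x k * z l * (Hx k k * Dxx c k l))"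
    by (simp add: sum_distrib_left mult_ac)
  also have "\<dots> = (\<Sum>k<N. \<Sum>l<N. - (x k * z l * (\<Sum>m<N. Hx m m * c m * D m k * D m l)) - x k * R c k l * z l
       - x k * z l * (if k = 0 then c 0 * Dh 0 l else 0) + x k * z l * (if k = N - 1 then c (N - 1) * Dh (N - 1) l else 0))"
    by (intro sum.cong refl) (simp add: entry algebra_simps)
  also have "\<dots> = ?R"
    using N_ge_2 by (simp only: sum.distrib sum_subtractf sum_negf sum_bilinear_rank_one_expand
        sum_sum_if_row[of 0] sum_sum_if_row[of "N - 1"]) (simp_all add: sum_distrib_left mult_ac)
  finally show ?thesis .
qed

end

text \<open>Hdiag and Hdiag_perp are the diagonals of H and of H_j^-1 H; on the faces Gamma_j^+- the
  latter is the diagonal of H_f.\<close>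

definition dir_apply :: "nat \<Rightarrow> nat \<Rightarrow> mat1 \<Rightarrow> gfun \<Rightarrow> gfun" where
  "dir_apply N j X y p = (\<Sum>m<N. X (p j) m * y (p(j := m)))"

definition Hdiag_perp :: "nat \<Rightarrow> mat1 \<Rightarrow> nat \<Rightarrow> gpt \<Rightarrow> real" where
  "Hdiag_perp d Hx j p = (\<Prod>l\<in>{..<d} - {j}. Hx (p l) (p l))"

definition Hdiag :: "nat \<Rightarrow> mat1 \<Rightarrow> gpt \<Rightarrow> real" where
  "Hdiag d Hx p = (\<Prod>l<d. Hx (p l) (p l))"

lemma dir_apply_upd: "dir_apply N j X y (p(j := m)) = (\<Sum>l<N. X m l * y (p(j := l)))"
  by (simp add: dir_apply_def)

lemma gline_upd: "gline N j c (p(j := m)) = gline N j c p"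
  by (simp add: gline_def fun_eq_iff)

lemma gline_at: "m < N \<Longrightarrow> gline N j c p m = c (p(j := m))"
  by (simp add: gline_def)

lemma Hdiag_perp_upd: "Hdiag_perp d Hx j (p(j := m)) = Hdiag_perp d Hx j p"
  unfolding Hdiag_perp_def by (rule prod.cong) auto

lemma Hdiag_upd: "j < d \<Longrightarrow> Hdiag d Hx (p(j := m)) = Hx m m * Hdiag_perp d Hx j p"
proof -
  assume j: "j < d"
  have "Hdiag d Hx (p(j := m)) = Hx m m * (\<Prod>l\<in>{..<d} - {j}. Hx ((p(j := m)) l) ((p(j := m)) l))"
    unfolding Hdiag_def using j by (subst prod.remove[of _ j]) auto
  also have "(\<Prod>l\<in>{..<d} - {j}. Hx ((p(j := m)) l) ((p(j := m)) l)) = Hdiag_perp d Hx j p"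
    unfolding Hdiag_perp_def by (rule prod.cong) auto
  finally show ?thesis .
qed

lemma Hdiag_split: "j < d \<Longrightarrow> Hdiag d Hx p = Hx (p j) (p j) * Hdiag_perp d Hx j p"
  using Hdiag_upd[of j d Hx p "p j"] by simp

definition acoef :: "nat \<Rightarrow> (nat \<Rightarrow> nat \<Rightarrow> gfun) \<Rightarrow> gfun \<Rightarrow> gfun \<Rightarrow> nat \<Rightarrow> nat \<Rightarrow> gfun" where
  "acoef d K J b j k = (\<lambda>q. (\<Sum>i<d. alpha K J i j i k q) * b q)"

lemma acoef_diag_eq_eta: "acoef d K J b j j = eta d K J b j"
  by (simp add: acoef_def eta_def fun_eq_iff)

context diag_sbp
begin

abbreviation "G \<equiv> grid d N"

lemma N_pos: "0 < N" using N_ge_2 by simp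

lemma Hx_pos_grid: "p \<in> G \<Longrightarrow> l < d \<Longrightarrow> 0 < Hx (p l) (p l)"
  by (rule Hx_pos) (simp add: grid_def)

lemma Hdiag_perp_pos: "p \<in> G \<Longrightarrow> 0 < Hdiag_perp d Hx j p"
  unfolding Hdiag_perp_def by (rule prod_pos) (use Hx_pos_grid in auto)

lemma Hdiag_pos: "p \<in> G \<Longrightarrow> 0 < Hdiag d Hx p"
  unfolding Hdiag_def by (rule prod_pos) (use Hx_pos_grid in auto)

lemma mvec_kdir:
  assumes p: "p \<in> G" and j: "j < d"
  shows "mvec G (kdir j X) y p = dir_apply N j X y p"
proof -
  have "mvec G (kdir j X) y p = (\<Sum>q\<in>G. if \<forall>l. l \<noteq> j \<longrightarrow> p l = q l then X (p j) (q j) * y q else 0)"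
    unfolding mvec_def by (rule sum.cong) (auto simp: kdir_def)
  then show ?thesis
    using sum_grid_line_through[OF p j, of "\<lambda>q. X (p j) (q j) * y q"] by (simp add: dir_apply_def)
qed

lemma mvec_dline:
  assumes p: "p \<in> G" and j: "j < d"
  shows "mvec G (dline N j Op c) y p = (\<Sum>m<N. Op (gline N j c p) (p j) m * y (p(j := m)))"
proof -
  have "mvec G (dline N j Op c) y p
      = (\<Sum>q\<in>G. if \<forall>l. l \<noteq> j \<longrightarrow> p l = q l then Op (gline N j c p) (p j) (q j) * y q else 0)"
    unfolding mvec_def by (rule sum.cong) (auto simp: dline_def)
  then show ?thesis
    using sum_grid_line_through[OF p j, of "\<lambda>q. Op (gline N j c p) (p j) (q j) * y q"] by simp
qed

lemma kall_diag: "p \<in> G \<Longrightarrow> q \<in> G \<Longrightarrow> kall d Hx p q = (if p = q then Hdiag d Hx p else 0)"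
proof -
  assume p: "p \<in> G" and q: "q \<in> G"
  show ?thesis
  proof (cases "p = q")
    case True then show ?thesis by (simp add: kall_def Hdiag_def)
  next
    case False
    then obtain l where l: "p l \<noteq> q l" by (auto simp: fun_eq_iff)
    have "l < d"
    proof (rule ccontr)
      assume "\<not> l < d"
      then show False using l p q by (auto simp: grid_def)
    qed
    then have "Hx (p l) (q l) = 0" using Hx_offdiag[of "p l" "q l"] l p q by (auto simp: grid_def)
    then have "kall d Hx p q = 0" unfolding kall_def using \<open>l < d\<close>
      by (subst prod.remove[of _ l]) auto
    then show ?thesis using False by simp
  qed
qed

lemma qf_kall: "qf G x (kall d Hx) y = (\<Sum>p\<in>G. x p * Hdiag d Hx p * y p)"
  unfolding qf_def
proof (rule sum.cong[OF refl])
  fix p assume p: "p \<in> G"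
  have "(\<Sum>q\<in>G. x p * kall d Hx p q * y q) = (\<Sum>q\<in>G. if q = p then x p * Hdiag d Hx p * y p else 0)"
    by (rule sum.cong[OF refl]) (auto simp: kall_diag[OF p])
  then show "(\<Sum>q\<in>G. x p * kall d Hx p q * y q) = x p * Hdiag d Hx p * y p" using p finite_grid by simp
qed

lemma vformP_eq: "vformP d N Hx J f g = (\<Sum>p\<in>G. Hdiag d Hx p * J p * f p * g p)"
  unfolding vformP_def qf_kall by (simp add: mult_ac)

lemma Dx_eq_dir_apply: "p \<in> G \<Longrightarrow> Dx d N D K i x p = (\<Sum>j<d. K i j p * dir_apply N j D x p)"
  unfolding Dx_def by (rule sum.cong[OF refl]) (simp add: mvec_kdir)

lemma Dx_has_derivative:
  assumes "\<forall>q\<in>G. ((\<lambda>s. u s q) has_real_derivative u' q) (at t)"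
  shows "((\<lambda>s. Dx d N D K i (u s) p) has_real_derivative Dx d N D K i u' p) (at t)"
  unfolding Dx_def mvec_def by (intro DERIV_sum DERIV_cmult) (use assms in blast)

definition bdry_diff :: "nat \<Rightarrow> gfun \<Rightarrow> real" where
  "bdry_diff j F = (\<Sum>p\<in>grid_base d N j. Hdiag_perp d Hx j p * (F (p(j := N - 1)) - F (p(j := 0))))"

lemma sum_grid_Hdiag_lines:
  assumes j: "j < d"
  shows "(\<Sum>p\<in>G. Hdiag d Hx p * F p)
       = (\<Sum>p\<in>grid_base d N j. Hdiag_perp d Hx j p * (\<Sum>m<N. Hx m m * F (p(j := m))))"
  by (simp add: sum_grid_by_lines[OF j N_pos] Hdiag_upd[OF j] sum_distrib_left mult_ac)

lemma grid_sum_by_parts: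
  assumes j: "j < d"
  shows "(\<Sum>p\<in>G. Hdiag d Hx p * x p * dir_apply N j D z p)
       = - (\<Sum>p\<in>G. Hdiag d Hx p * dir_apply N j D x p * z p) + bdry_diff j (\<lambda>p. x p * z p)"
proof -
  have "(\<Sum>p\<in>G. Hdiag d Hx p * x p * dir_apply N j D z p)
      = (\<Sum>p\<in>grid_base d N j. Hdiag_perp d Hx j p * (\<Sum>k<N. Hx k k * x (p(j := k)) * (\<Sum>l<N. D k l * z (p(j := l)))))"
    by (simp add: sum_grid_Hdiag_lines[OF j] dir_apply_upd mult.assoc)
  also have "\<dots> = (\<Sum>p\<in>grid_base d N j. Hdiag_perp d Hx j p *
      (- (\<Sum>l<N. Hx l l * (\<Sum>k<N. D l k * x (p(j := k))) * z (p(j := l)))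
       + x (p(j := N - 1)) * z (p(j := N - 1)) - x (p(j := 0)) * z (p(j := 0))))"
    by (simp only: sbp_sum_by_parts)
  also have "\<dots> = - (\<Sum>p\<in>G. Hdiag d Hx p * dir_apply N j D x p * z p) + bdry_diff j (\<lambda>p. x p * z p)"
    by (simp add: sum_grid_Hdiag_lines[OF j] dir_apply_upd bdry_diff_def distrib_left right_diff_distrib
        sum.distrib sum_subtractf sum_negf mult.assoc)
  finally show ?thesis .
qed

lemma grid_sum_by_parts_second:
  assumes j: "j < d"
  shows "(\<Sum>p\<in>G. Hdiag d Hx p * x p * mvec G (dline N j Dxx c) y p)
       = - (\<Sum>p\<in>G. Hdiag d Hx p * c p * dir_apply N j D x p * dir_apply N j D y p)
         - (\<Sum>p\<in>grid_base d N j. Hdiag_perp d Hx j p * (\<Sum>k<N. \<Sum>l<N. x (p(j := k)) * R (gline N j c p) k l * y (p(j := l))))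
         + bdry_diff j (\<lambda>p. x p * c p * dir_apply N j Dh y p)"
proof -
  have line_op: "mvec G (dline N j Dxx c) y (p(j := m)) = (\<Sum>l<N. Dxx (gline N j c p) m l * y (p(j := l)))"
    if "p \<in> grid_base d N j" "m < N" for p m
    using mvec_dline[OF grid_upd[OF _ j that(2)] j, of p] that by (simp add: grid_base_def gline_upd)
  have "(\<Sum>p\<in>G. Hdiag d Hx p * x p * mvec G (dline N j Dxx c) y p)
      = (\<Sum>p\<in>grid_base d N j. Hdiag_perp d Hx j p *
           (\<Sum>k<N. Hx k k * x (p(j := k)) * (\<Sum>l<N. Dxx (gline N j c p) k l * y (p(j := l)))))"
    by (simp add: sum_grid_Hdiag_lines[OF j] line_op mult.assoc)
  also have "\<dots> = (\<Sum>p\<in>grid_base d N j. Hdiag_perp d Hx j p *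
      (- (\<Sum>m<N. Hx m m * gline N j c p m * (\<Sum>k<N. D m k * x (p(j := k))) * (\<Sum>l<N. D m l * y (p(j := l))))
       - (\<Sum>k<N. \<Sum>l<N. x (p(j := k)) * R (gline N j c p) k l * y (p(j := l)))
       - x (p(j := 0)) * gline N j c p 0 * (\<Sum>l<N. Dh 0 l * y (p(j := l)))
       + x (p(j := N - 1)) * gline N j c p (N - 1) * (\<Sum>l<N. Dh (N - 1) l * y (p(j := l)))))"
    by (simp only: sbp_sum_by_parts_second)
  also have "\<dots> = - (\<Sum>p\<in>G. Hdiag d Hx p * c p * dir_apply N j D x p * dir_apply N j D y p)
         - (\<Sum>p\<in>grid_base d N j. Hdiag_perp d Hx j p * (\<Sum>k<N. \<Sum>l<N. x (p(j := k)) * R (gline N j c p) k l * y (p(j := l))))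
         + bdry_diff j (\<lambda>p. x p * c p * dir_apply N j Dh y p)"
    using N_ge_2 by (simp add: sum_grid_Hdiag_lines[OF j] dir_apply_upd bdry_diff_def gline_at distrib_left
        right_diff_distrib sum.distrib sum_subtractf sum_negf mult.assoc)
  finally show ?thesis .
qed

lemma Rdir_eq:
  assumes p: "p \<in> G" and q: "q \<in> G" and j: "j < d"
  shows "Rdir d N Hx R j c p q = (if \<forall>l. l \<noteq> j \<longrightarrow> p l = q l then Hdiag_perp d Hx j p * R (gline N j c p) (p j) (q j) else 0)"
proof -
  have pj: "0 < Hx (p j) (p j)" using Hx_pos_grid[OF p j] .
  have inner: "mmul G (dinv (kdir j Hx)) (kall d Hx) p r = kall d Hx p r / Hx (p j) (p j)" for r
  proof -
    have "mmul G (dinv (kdir j Hx)) (kall d Hx) p r = (\<Sum>s\<in>G. if s = p then kall d Hx p r / Hx (p j) (p j) else 0)"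
      unfolding mmul_def by (rule sum.cong) (auto simp: dinv_def kdir_def)
    then show ?thesis using p finite_grid by simp
  qed
  have "Rdir d N Hx R j c p q = (\<Sum>r\<in>G. if r = p then Hdiag d Hx p / Hx (p j) (p j) * dline N j R c p q else 0)"
    unfolding Rdir_def mmul_def[of G _ "dline N j R c"] inner
    by (rule sum.cong) (auto simp: kall_diag[OF p])
  also have "\<dots> = Hdiag d Hx p / Hx (p j) (p j) * dline N j R c p q" using p finite_grid by simp
  also have "Hdiag d Hx p / Hx (p j) (p j) = Hdiag_perp d Hx j p" using Hdiag_split[OF j] pj by simp
  finally show ?thesis by (auto simp: dline_def)
qed

lemma qf_Rdir_by_lines:
  assumes j: "j < d"
  shows "qf G x (Rdir d N Hx R j c) y
     = (\<Sum>p\<in>grid_base d N j. Hdiag_perp d Hx j p *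
          (\<Sum>k<N. \<Sum>l<N. x (p(j := k)) * R (gline N j c p) k l * y (p(j := l))))"
proof -
  have row: "(\<Sum>q\<in>G. x p * Rdir d N Hx R j c p q * y q)
      = (\<Sum>m<N. x p * (Hdiag_perp d Hx j p * R (gline N j c p) (p j) m) * y (p(j := m)))"
    if p: "p \<in> G" for p
    using sum_grid_line_through[OF p j, of "\<lambda>q. x p * (Hdiag_perp d Hx j p * R (gline N j c p) (p j) (q j)) * y q"]
    by (simp add: Rdir_eq[OF p _ j] if_distrib[of "\<lambda>r. x p * r * _"] cong: if_cong)
  have "qf G x (Rdir d N Hx R j c) y
      = (\<Sum>p\<in>G. \<Sum>m<N. x p * (Hdiag_perp d Hx j p * R (gline N j c p) (p j) m) * y (p(j := m)))"
    unfolding qf_def by (rule sum.cong[OF refl]) (rule row)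
  also have "\<dots> = (\<Sum>p\<in>grid_base d N j. \<Sum>k<N. \<Sum>m<N.
                    x (p(j := k)) * (Hdiag_perp d Hx j p * R (gline N j c p) k m) * y (p(j := m)))"
    by (simp add: sum_grid_by_lines[OF j N_pos] Hdiag_perp_upd gline_upd)
  finally show ?thesis by (simp add: sum_distrib_left mult_ac)
qed

lemma gline_nonneg: "(\<forall>q\<in>G. 0 \<le> c q) \<Longrightarrow> p \<in> G \<Longrightarrow> k < d \<Longrightarrow> \<forall>m<N. 0 \<le> gline N k c p m"
  by (auto simp: gline_def grid_upd)

lemma Rdir_symmetric:
  assumes c: "\<forall>q\<in>G. 0 \<le> c q" and p: "p \<in> G" and q: "q \<in> G" and k: "k < d"
  shows "Rdir d N Hx R k c p q = Rdir d N Hx R k c q p"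
proof (cases "\<forall>l. l \<noteq> k \<longrightarrow> p l = q l")
  case True
  then have upd: "p(k := m) = q(k := m)" for m by (auto simp: fun_eq_iff)
  then have "Hdiag_perp d Hx k p = Hdiag_perp d Hx k q" by (metis Hdiag_perp_upd)
  moreover have "gline N k c p = gline N k c q" unfolding gline_def upd ..
  moreover have "R (gline N k c p) (p k) (q k) = R (gline N k c p) (q k) (p k)"
    using R_symmetric[OF gline_nonneg[OF c p k] grid_less[OF p k] grid_less[OF q k]] .
  moreover have "\<forall>l. l \<noteq> k \<longrightarrow> q l = p l" using True by auto
  ultimately show ?thesis using True by (simp add: Rdir_eq[OF p q k] Rdir_eq[OF q p k])
next
  case False
  moreover have "\<not> (\<forall>l. l \<noteq> k \<longrightarrow> q l = p l)" using False by auto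
  ultimately show ?thesis by (simp only: Rdir_eq[OF p q k] Rdir_eq[OF q p k] if_False)
qed

lemma qf_Rdir_nonneg:
  assumes c: "\<forall>q\<in>G. 0 \<le> c q" and k: "k < d"
  shows "0 \<le> qf G x (Rdir d N Hx R k c) x"
  unfolding qf_Rdir_by_lines[OF k]
proof (rule sum_nonneg)
  fix p assume "p \<in> grid_base d N k"
  then have p: "p \<in> G" by (simp add: grid_base_def)
  show "0 \<le> Hdiag_perp d Hx k p * (\<Sum>k'<N. \<Sum>l<N. x (p(k := k')) * R (gline N k c p) k' l * x (p(k := l)))"
    using Hdiag_perp_pos[OF p, of k] R_form_nonneg[OF gline_nonneg[OF c p k], of "\<lambda>m. x (p(k := m))"]
    by simp
qed

section \<open>The discrete Green identity\<close>

text \<open>The flux through the faces normal to direction j: the k = j term uses Dhat_j, as in the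
  boundary closure of D_jj(c).\<close>

definition bflux :: "(nat \<Rightarrow> nat \<Rightarrow> gfun) \<Rightarrow> gfun \<Rightarrow> gfun \<Rightarrow> gfun \<Rightarrow> nat \<Rightarrow> gfun" where
  "bflux K J b y j p =
     (\<Sum>k<d. acoef d K J b j k p * (if j = k then dir_apply N j Dh y p else dir_apply N k D y p))"

lemma bdry_diff_sum: "finite S \<Longrightarrow> bdry_diff j (\<lambda>p. \<Sum>k\<in>S. F k p) = (\<Sum>k\<in>S. bdry_diff j (F k))"
  unfolding bdry_diff_def by (simp add: sum_subtractf[symmetric] sum_distrib_left sum.swap[of _ "grid_base d N j"])

lemma mvec_kdir_dg_kdir:
  "p \<in> G \<Longrightarrow> j < d \<Longrightarrow> k < d \<Longrightarrow>
   mvec G (kdir j D) (\<lambda>q. c q * mvec G (kdir k D) y q) p = dir_apply N j D (\<lambda>q. c q * dir_apply N k D y q) p"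
  unfolding mvec_kdir dir_apply_def by (rule sum.cong[OF refl]) (simp add: mvec_kdir grid_upd dir_apply_def)

lemma sum_Hdiag_DDjk:
  assumes j: "j < d" and k: "k < d"
  shows "(\<Sum>p\<in>G. Hdiag d Hx p * x p * mvec G (DDjk d N D Dxx j k c) y p)
   = - (\<Sum>p\<in>G. Hdiag d Hx p * dir_apply N j D x p * c p * dir_apply N k D y p)
     - (if j = k then qf G x (Rdir d N Hx R j c) y else 0)
     + bdry_diff j (\<lambda>p. x p * c p * (if j = k then dir_apply N j Dh y p else dir_apply N k D y p))"
proof (cases "j = k")
  case True
  then show ?thesis
    using grid_sum_by_parts_second[OF j, of x c y] qf_Rdir_by_lines[OF j, of x c y]
    by (simp add: DDjk_def mult_ac)
next
  case False
  have "mvec G (DDjk d N D Dxx j k c) y p = dir_apply N j D (\<lambda>q. c q * dir_apply N k D y q) p"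
    if "p \<in> G" for p
    using False by (simp add: DDjk_def mvec_mmul_dg[OF finite_grid] mvec_kdir_dg_kdir[OF that j k])
  then show ?thesis
    using False grid_sum_by_parts[OF j, of x "\<lambda>q. c q * dir_apply N k D y q"] by (simp add: mult_ac)
qed

lemma sum_acoef_eq_sum_Dx:
  "(\<Sum>j<d. \<Sum>k<d. \<Sum>p\<in>G. Hdiag d Hx p * dir_apply N j D x p * acoef d K J b j k p * dir_apply N k D y p)
   = (\<Sum>i<d. \<Sum>p\<in>G. Hdiag d Hx p * (J p * b p) * (Dx d N D K i x p * Dx d N D K i y p))"
proof -
  have pointwise: "(\<Sum>j<d. \<Sum>k<d. dir_apply N j D x p * acoef d K J b j k p * dir_apply N k D y p)
     = (\<Sum>i<d. J p * b p * Dx d N D K i x p * Dx d N D K i y p)" if p: "p \<in> G" for p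
  proof -
    have "(\<Sum>j<d. \<Sum>k<d. dir_apply N j D x p * acoef d K J b j k p * dir_apply N k D y p)
       = (\<Sum>j<d. \<Sum>k<d. dir_apply N j D x p * dir_apply N k D y p * (\<Sum>i<d. J p * b p * K i j p * K i k p))"
      by (intro sum.cong refl) (simp add: acoef_def alpha_def sum_distrib_left sum_distrib_right mult_ac)
    also have "\<dots> = (\<Sum>i<d. J p * b p * (\<Sum>j<d. K i j p * dir_apply N j D x p) * (\<Sum>k<d. K i k p * dir_apply N k D y p))"
      by (rule sum_bilinear_rank_one_expand)
    finally show ?thesis by (simp add: Dx_eq_dir_apply[OF p])
  qed
  have "(\<Sum>j<d. \<Sum>k<d. \<Sum>p\<in>G. Hdiag d Hx p * dir_apply N j D x p * acoef d K J b j k p * dir_apply N k D y p)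
      = (\<Sum>j<d. \<Sum>p\<in>G. \<Sum>k<d. Hdiag d Hx p * dir_apply N j D x p * acoef d K J b j k p * dir_apply N k D y p)"
    by (intro sum.cong refl sum.swap)
  also have "\<dots> = (\<Sum>p\<in>G. Hdiag d Hx p * (\<Sum>j<d. \<Sum>k<d. dir_apply N j D x p * acoef d K J b j k p * dir_apply N k D y p))"
    by (subst sum.swap) (simp add: sum_distrib_left mult_ac)
  also have "\<dots> = (\<Sum>p\<in>G. \<Sum>i<d. Hdiag d Hx p * (J p * b p) * (Dx d N D K i x p * Dx d N D K i y p))"
    by (intro sum.cong refl) (simp only: pointwise, simp add: sum_distrib_left mult_ac)
  also have "\<dots> = (\<Sum>i<d. \<Sum>p\<in>G. Hdiag d Hx p * (J p * b p) * (Dx d N D K i x p * Dx d N D K i y p))"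
    by (rule sum.swap)
  finally show ?thesis .
qed

lemma green_identity:
  "(\<Sum>p\<in>G. Hdiag d Hx p * x p * scheme_rhs d N D Dxx K J b y p)
   = - (\<Sum>i<d. \<Sum>p\<in>G. Hdiag d Hx p * (J p * b p) * (Dx d N D K i x p * Dx d N D K i y p))
     - (\<Sum>k<d. qf G x (Rdir d N Hx R k (eta d K J b k)) y)
     + (\<Sum>j<d. bdry_diff j (\<lambda>p. x p * bflux K J b y j p))"
proof -
  have "(\<Sum>p\<in>G. Hdiag d Hx p * x p * scheme_rhs d N D Dxx K J b y p)
      = (\<Sum>j<d. \<Sum>k<d. \<Sum>p\<in>G. Hdiag d Hx p * x p * mvec G (DDjk d N D Dxx j k (acoef d K J b j k)) y p)"
    unfolding scheme_rhs_def acoef_def[symmetric]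
    by (simp add: sum_distrib_left sum.swap[of _ G])
  also have "\<dots> = (\<Sum>j<d. \<Sum>k<d.
       - (\<Sum>p\<in>G. Hdiag d Hx p * dir_apply N j D x p * acoef d K J b j k p * dir_apply N k D y p)
       - (if j = k then qf G x (Rdir d N Hx R j (acoef d K J b j k)) y else 0)
       + bdry_diff j (\<lambda>p. x p * acoef d K J b j k p * (if j = k then dir_apply N j Dh y p else dir_apply N k D y p)))"
    by (intro sum.cong refl) (simp add: sum_Hdiag_DDjk)
  also have "\<dots> = - (\<Sum>j<d. \<Sum>k<d. \<Sum>p\<in>G. Hdiag d Hx p * dir_apply N j D x p * acoef d K J b j k p * dir_apply N k D y p)
       - (\<Sum>j<d. \<Sum>k<d. if j = k then qf G x (Rdir d N Hx R j (acoef d K J b j k)) y else 0)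
       + (\<Sum>j<d. \<Sum>k<d. bdry_diff j (\<lambda>p. x p * acoef d K J b j k p *
                                   (if j = k then dir_apply N j Dh y p else dir_apply N k D y p)))"
    by (simp only: sum.distrib sum_subtractf sum_negf)
  also have "(\<Sum>j<d. \<Sum>k<d. if j = k then qf G x (Rdir d N Hx R j (acoef d K J b j k)) y else 0)
      = (\<Sum>k<d. qf G x (Rdir d N Hx R k (eta d K J b k)) y)"
    by (simp add: acoef_diag_eq_eta)
  also have "(\<Sum>j<d. \<Sum>k<d. bdry_diff j (\<lambda>p. x p * acoef d K J b j k p *
                                   (if j = k then dir_apply N j Dh y p else dir_apply N k D y p)))
      = (\<Sum>j<d. bdry_diff j (\<lambda>p. x p * bflux K J b y j p))"
    by (simp add: bflux_def bdry_diff_sum sum_distrib_left mult.assoc)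
  finally show ?thesis unfolding sum_acoef_eq_sum_Dx .
qed

section \<open>Boundary terms\<close>

lemma facepts_G: "q \<in> facepts d N f \<Longrightarrow> q \<in> G"
  by (simp add: facepts_def)

lemma fin_facepts: "finite (facepts d N f)"
  using finite_grid by (rule finite_subset[rotated]) (auto simp: facepts_def)

lemma ftr_eq: "q \<in> facepts d N f \<Longrightarrow> ftr d N f u q = u q"
proof -
  assume q: "q \<in> facepts d N f"
  have "ftr d N f u q = (\<Sum>p\<in>G. if p = q then u q else 0)"
    unfolding ftr_def by (rule sum.cong) (use q in \<open>auto simp: ef_def\<close>)
  then show ?thesis using facepts_G[OF q] finite_grid by simp
qed

lemma fext_eq: "fext d N f w p = (if p \<in> facepts d N f then w p else 0)"
proof -
  have "fext d N f w p = (\<Sum>q\<in>facepts d N f. if q = p then w p else 0)"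
    unfolding fext_def ef_def by (rule sum.cong[OF refl]) auto
  then show ?thesis using fin_facepts by simp
qed

lemma Hf_eq:
  assumes f: "fst f < d" and q: "q \<in> facepts d N f" and q': "q' \<in> facepts d N f"
  shows "Hf d Hx f q q' = (if q = q' then Hdiag_perp d Hx (fst f) q else 0)"
proof (cases "q = q'")
  case True then show ?thesis by (simp add: Hf_def Hdiag_perp_def)
next
  case False
  then obtain l where l: "q l \<noteq> q' l" by (auto simp: fun_eq_iff)
  have qG: "q \<in> G" "q' \<in> G" using q q' by (auto simp: facepts_def)
  have "l < d"
  proof (rule ccontr)
    assume "\<not> l < d" then show False using l qG by (auto simp: grid_def)
  qed
  have "l \<noteq> fst f" using l q q' by (auto simp: facepts_def)
  have "Hx (q l) (q' l) = 0" using Hx_offdiag[of "q l" "q' l"] l qG \<open>l < d\<close> by (auto simp: grid_def)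
  then have "Hf d Hx f q q' = 0" unfolding Hf_def using \<open>l < d\<close> \<open>l \<noteq> fst f\<close>
    by (subst prod.remove[of _ l]) auto
  then show ?thesis using False by simp
qed

lemma bformP_eq:
  "bformP d N Hx gam (\<lambda>f. x) V
     = (\<Sum>f\<in>faces d. \<Sum>q\<in>facepts d N f. x q * Hdiag_perp d Hx (fst f) q * (gam f q * V f q))"
  unfolding bformP_def bform_def
proof (intro sum.cong refl)
  fix f q assume f: "f \<in> faces d" and q: "q \<in> facepts d N f"
  have fd: "fst f < d" using f by (auto simp: faces_def)
  have "(\<Sum>q'\<in>facepts d N f. ftr d N f x q * Hf d Hx f q q' * ftr d N f (\<lambda>p. gam f p * V f p) q')
      = (\<Sum>q'\<in>facepts d N f. if q' = q then x q * Hdiag_perp d Hx (fst f) q * (gam f q * V f q) else 0)"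
    by (intro sum.cong refl) (auto simp: ftr_eq q Hf_eq[OF fd q])
  then show "(\<Sum>q'\<in>facepts d N f. ftr d N f x q * Hf d Hx f q q' * ftr d N f (\<lambda>p. gam f p * V f p) q')
      = x q * Hdiag_perp d Hx (fst f) q * (gam f q * V f q)"
    using fin_facepts q by simp
qed

lemma bdry_diff_faces:
  assumes j: "j < d"
  shows "bdry_diff j F = (\<Sum>q\<in>facepts d N (j, True). Hdiag_perp d Hx j q * F q)
                        - (\<Sum>q\<in>facepts d N (j, False). Hdiag_perp d Hx j q * F q)"
proof -
  have "bdry_diff j F = (\<Sum>p\<in>grid_base d N j. Hdiag_perp d Hx j (p(j := N - 1)) * F (p(j := N - 1)))
                      - (\<Sum>p\<in>grid_base d N j. Hdiag_perp d Hx j (p(j := 0)) * F (p(j := 0)))"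
    unfolding bdry_diff_def by (simp add: Hdiag_perp_upd right_diff_distrib sum_subtractf)
  also have "\<dots> = (\<Sum>q\<in>{q \<in> G. q j = N - 1}. Hdiag_perp d Hx j q * F q)
                 - (\<Sum>q\<in>{q \<in> G. q j = 0}. Hdiag_perp d Hx j q * F q)"
  proof -
    have e: "N - 1 < N" "0 < N" using N_ge_2 by auto
    show ?thesis
      using sum_grid_base_shift[OF j e(1), of "\<lambda>q. Hdiag_perp d Hx j q * F q"]
        sum_grid_base_shift[OF j e(2), of "\<lambda>q. Hdiag_perp d Hx j q * F q"]
      by simp
  qed
  finally show ?thesis by (simp add: facepts_def)
qed

lemma Dn_on_face:
  assumes j: "j < d" and q: "q \<in> G"
  shows "Dn d N D Dh K J gam (j, s) y q = (if s then 1 else -1) / gam (j, s) q *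
     ((\<Sum>k<d. (\<Sum>i<d. alpha K J i j i k q) * dir_apply N k D y q)
      - (\<Sum>i<d. alpha K J i j i j q) * (dir_apply N j D y q - dir_apply N j Dh y q))"
proof -
  define \<sigma> :: real where "\<sigma> = (if s then 1 else -1)"
  define g where "g = gam (j, s) q"
  have tangential: "(\<Sum>i<d. \<Sum>j'<d. \<Sum>k<d. nu (j, s) j' * alpha K J i j' i k q / g * mvec G (kdir k D) y q)
      = \<sigma> / g * (\<Sum>k<d. (\<Sum>i<d. alpha K J i j i k q) * dir_apply N k D y q)"
  proof -
    have "(\<Sum>i<d. \<Sum>j'<d. \<Sum>k<d. nu (j, s) j' * alpha K J i j' i k q / g * mvec G (kdir k D) y q)
       = (\<Sum>i<d. \<Sum>j'<d. nu (j, s) j' * (\<Sum>k<d. alpha K J i j' i k q / g * dir_apply N k D y q))"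
      by (intro sum.cong refl) (simp add: mvec_kdir[OF q] sum_distrib_left mult_ac)
    also have "\<dots> = (\<Sum>i<d. \<sigma> * (\<Sum>k<d. alpha K J i j i k q / g * dir_apply N k D y q))"
      by (rule sum.cong[OF refl]) (simp add: sum_nu[OF j] \<sigma>_def)
    also have "\<dots> = \<sigma> / g * (\<Sum>i<d. \<Sum>k<d. alpha K J i j i k q * dir_apply N k D y q)"
      by (simp add: sum_distrib_left mult_ac)
    also have "(\<Sum>i<d. \<Sum>k<d. alpha K J i j i k q * dir_apply N k D y q)
        = (\<Sum>k<d. (\<Sum>i<d. alpha K J i j i k q) * dir_apply N k D y q)"
      by (subst sum.swap) (simp add: sum_distrib_right)
    finally show ?thesis .
  qed
  have normal: "(\<Sum>k<d. nu (j, s) k * (\<Sum>i<d. alpha K J i k i k q) / g * mvec G (kdir k (\<lambda>m n. D m n - Dh m n)) y q)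
      = \<sigma> / g * ((\<Sum>i<d. alpha K J i j i j q) * (dir_apply N j D y q - dir_apply N j Dh y q))"
  proof -
    have "mvec G (kdir k (\<lambda>m n. D m n - Dh m n)) y q = dir_apply N k D y q - dir_apply N k Dh y q"
      if "k < d" for k
      using mvec_kdir[OF q that] by (simp add: dir_apply_def left_diff_distrib sum_subtractf)
    then have "(\<Sum>k<d. nu (j, s) k * (\<Sum>i<d. alpha K J i k i k q) / g * mvec G (kdir k (\<lambda>m n. D m n - Dh m n)) y q)
        = (\<Sum>k<d. nu (j, s) k * ((\<Sum>i<d. alpha K J i k i k q) / g * (dir_apply N k D y q - dir_apply N k Dh y q)))"
      by (intro sum.cong refl) simp
    also have "\<dots> = \<sigma> * ((\<Sum>i<d. alpha K J i j i j q) / g * (dir_apply N j D y q - dir_apply N j Dh y q))"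
      unfolding \<sigma>_def by (rule sum_nu[OF j])
    finally show ?thesis by simp
  qed
  show ?thesis
    unfolding Dn_def g_def[symmetric] tangential normal by (simp add: \<sigma>_def right_diff_distrib)
qed

lemma bflux_eq:
  assumes j: "j < d"
  shows "bflux K J b y j q = b q *
     ((\<Sum>k<d. (\<Sum>i<d. alpha K J i j i k q) * dir_apply N k D y q)
      - (\<Sum>i<d. alpha K J i j i j q) * (dir_apply N j D y q - dir_apply N j Dh y q))"
proof -
  have "bflux K J b y j q = (\<Sum>k<d. if j = k then acoef d K J b j j q * dir_apply N j Dh y q
                                   else acoef d K J b j k q * dir_apply N k D y q)"
    unfolding bflux_def by (intro sum.cong refl) auto
  then show ?thesis by (simp add: sum_replace_term[OF j] acoef_def sum_distrib_left algebra_simps)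
qed

lemma gam_Dn_face_eq_bflux:
  assumes j: "j < d" and q: "q \<in> facepts d N (j, s)" and g: "gam (j, s) q \<noteq> 0"
  shows "gam (j, s) q * (b q * Dn d N D Dh K J gam (j, s) y q) = (if s then 1 else -1) * bflux K J b y j q"
  using g unfolding Dn_on_face[OF j facepts_G[OF q]] bflux_eq[OF j] by simp

lemma bdry_diff_bflux_eq_bformP:
  assumes gam: "\<forall>f\<in>faces d. \<forall>p\<in>facepts d N f. 0 < gam f p"
  shows "(\<Sum>j<d. bdry_diff j (\<lambda>p. x p * bflux K J b y j p))
       = bformP d N Hx gam (\<lambda>f. x) (\<lambda>f p. b p * Dn d N D Dh K J gam f y p)"
proof -
  have face: "x q * Hdiag_perp d Hx j q * (gam (j, s) q * (b q * Dn d N D Dh K J gam (j, s) y q))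
      = (if s then 1 else -1) * (Hdiag_perp d Hx j q * (x q * bflux K J b y j q))"
    if j: "j < d" and q: "q \<in> facepts d N (j, s)" for j s q
  proof -
    have "gam (j, s) q \<noteq> 0" using gam j q by (fastforce simp: faces_def)
    then show ?thesis using gam_Dn_face_eq_bflux[OF j q] by simp
  qed
  show ?thesis
    unfolding bformP_eq sum_faces
    by (intro sum.cong refl) (simp add: face bdry_diff_faces sum_negf)
qed

lemma mvec_dinv_kall: "p \<in> G \<Longrightarrow> mvec G (dinv (kall d Hx)) v p = v p / Hdiag d Hx p"
proof -
  assume p: "p \<in> G"
  have "mvec G (dinv (kall d Hx)) v p = (\<Sum>q\<in>G. if q = p then v p / Hdiag d Hx p else 0)"
    unfolding mvec_def by (rule sum.cong[OF refl]) (auto simp: dinv_def kall_def Hdiag_def)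
  then show ?thesis using p finite_grid by simp
qed

lemma sum_fext: "(\<Sum>p\<in>G. x p * fext d N f v p) = (\<Sum>q\<in>facepts d N f. x q * v q)"
proof -
  have "(\<Sum>p\<in>G. x p * fext d N f v p) = (\<Sum>p\<in>G. if p \<in> facepts d N f then x p * v p else 0)"
    by (rule sum.cong[OF refl]) (simp add: fext_eq)
  also have "\<dots> = (\<Sum>p\<in>{p \<in> G. p \<in> facepts d N f}. x p * v p)"
    by (simp add: sum.inter_filter[OF finite_grid])
  finally show ?thesis by (simp add: facepts_def)
qed

lemma face_penalty_eq:
  assumes f: "f \<in> faces d" and q: "q \<in> facepts d N f"
  shows "gam f q * (\<Sum>r\<in>facepts d N f. Hf d Hx f q r * (b r * (ftr d N f v r - 0)))
       = Hdiag_perp d Hx (fst f) q * (gam f q * (b q * v q))"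
proof -
  have fd: "fst f < d" using f by (auto simp: faces_def)
  have "(\<Sum>r\<in>facepts d N f. Hf d Hx f q r * (b r * (ftr d N f v r - 0)))
      = (\<Sum>r\<in>facepts d N f. if r = q then Hdiag_perp d Hx (fst f) q * (b q * v q) else 0)"
    by (rule sum.cong[OF refl]) (auto simp: Hf_eq[OF fd q] ftr_eq)
  then show ?thesis using q fin_facepts by simp
qed

lemma qf_sat_neumann:
  "qf G x (kall d Hx) (sat_neumann d N Hx D Dh K J b gam y)
     = - bformP d N Hx gam (\<lambda>f. x) (\<lambda>f p. b p * Dn d N D Dh K J gam f y p)"
proof -
  define pen where "pen f r = gam f r * (\<Sum>r'\<in>facepts d N f. Hf d Hx f r r' *
                    (b r' * (ftr d N f (Dn d N D Dh K J gam f y) r' - 0)))" for f r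
  have pen: "pen f q = Hdiag_perp d Hx (fst f) q * (gam f q * (b q * Dn d N D Dh K J gam f y q))"
    if "f \<in> faces d" "q \<in> facepts d N f" for f q
    unfolding pen_def by (rule face_penalty_eq[OF that])
  have "qf G x (kall d Hx) (sat_neumann d N Hx D Dh K J b gam y)
      = (\<Sum>p\<in>G. - (x p * (\<Sum>f\<in>faces d. fext d N f (pen f) p)))"
    unfolding qf_kall sat_neumann_def pen_def
    by (intro sum.cong refl) (simp add: mvec_dinv_kall Hdiag_pos less_imp_neq[symmetric])
  also have "\<dots> = - (\<Sum>f\<in>faces d. \<Sum>q\<in>facepts d N f. x q * pen f q)"
    unfolding sum_negf sum_distrib_left by (subst sum.swap) (simp add: sum_fext)
  also have "\<dots> = - bformP d N Hx gam (\<lambda>f. x) (\<lambda>f p. b p * Dn d N D Dh K J gam f y p)"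
    unfolding bformP_eq by (intro arg_cong[where f = uminus] sum.cong refl) (simp add: pen mult_ac)
  finally show ?thesis .
qed

section \<open>The energy\<close>

lemma eta_nonneg:
  assumes "0 \<le> J p" and "0 \<le> b p"
  shows "0 \<le> eta d K J b k p"
proof -
  have "0 \<le> K i k p * J p * K i k p" for i
    using mult_nonneg_nonneg[OF assms(1) zero_le_square[of "K i k p"]] by (simp add: mult_ac)
  then show ?thesis unfolding eta_def alpha_def using assms(2) by (simp add: sum_nonneg)
qed

lemma qf_Rdir_has_derivative:
  assumes c: "\<forall>q\<in>G. 0 \<le> c q" and k: "k < d"
    and du: "\<forall>q\<in>G. ((\<lambda>s. u s q) has_real_derivative u' q) (at t)"
  shows "((\<lambda>s. qf G (u s) (Rdir d N Hx R k c) (u s)) has_real_derivative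
           2 * qf G u' (Rdir d N Hx R k c) (u t)) (at t)"
  by (rule qf_symmetric_has_derivative) (use Rdir_symmetric[OF c _ _ k] du in auto)

lemma energy_eq:
  assumes pos: "\<forall>p\<in>G. 0 < J p \<and> 0 < a p \<and> 0 < b p"
  shows "energy d N Hx D R K J a b u v
    = 1/2 * (\<Sum>p\<in>G. (Hdiag d Hx p * J p * a p) * (v p * v p))
    + (\<Sum>i<d. 1/2 * (\<Sum>p\<in>G. (Hdiag d Hx p * (J p * b p)) * (Dx d N D K i u p * Dx d N D K i u p)))
    + (\<Sum>k<d. 1/2 * qf G u (Rdir d N Hx R k (eta d K J b k)) u)"
proof -
  have "sqrt (a p) * sqrt (a p) = a p" "sqrt (b p) * sqrt (b p) = b p" if "p \<in> G" for p
    using pos that by auto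
  then have sq: "sqrt (a p) * (sqrt (a p) * z) = a p * z" "sqrt (b p) * (sqrt (b p) * z) = b p * z"
    if "p \<in> G" for p z
    using that by (simp_all flip: mult.assoc)
  show ?thesis unfolding energy_def vformP_eq by (simp add: sq sum_distrib_left mult_ac)
qed

lemma energy_nonneg:
  assumes pos: "\<forall>p\<in>G. 0 < J p \<and> 0 < a p \<and> 0 < b p"
  shows "0 \<le> energy d N Hx D R K J a b u v"
proof -
  have "0 \<le> (Hdiag d Hx p * J p * a p) * (v p * v p)"
    and "0 \<le> (Hdiag d Hx p * (J p * b p)) * (Dx d N D K i u p * Dx d N D K i u p)" if "p \<in> G" for p i
    using pos that Hdiag_pos[OF that] by (simp_all add: less_imp_le)
  moreover have "0 \<le> qf G u (Rdir d N Hx R k (eta d K J b k)) u" if "k < d" for k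
    using pos by (intro qf_Rdir_nonneg[OF _ that] ballI eta_nonneg) auto
  ultimately show ?thesis
    unfolding energy_eq[OF pos]
    by (intro add_nonneg_nonneg mult_nonneg_nonneg[of "1/2"] sum_nonneg) auto
qed

lemma energy_deriv:
  assumes pos: "\<forall>p\<in>G. 0 < J p \<and> 0 < a p \<and> 0 < b p"
    and du: "\<forall>p\<in>G. ((\<lambda>s. u s p) has_real_derivative u' t p) (at t)"
    and dv: "\<forall>p\<in>G. ((\<lambda>s. u' s p) has_real_derivative u'' t p) (at t)"
  shows "((\<lambda>s. energy d N Hx D R K J a b (u s) (u' s)) has_real_derivative
     (\<Sum>p\<in>G. (Hdiag d Hx p * J p * a p) * (u'' t p * u' t p))
     + (\<Sum>i<d. \<Sum>p\<in>G. Hdiag d Hx p * (J p * b p) * (Dx d N D K i (u' t) p * Dx d N D K i (u t) p))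
     + (\<Sum>k<d. qf G (u' t) (Rdir d N Hx R k (eta d K J b k)) (u t))) (at t)"
proof -
  have kinetic: "((\<lambda>s. 1/2 * (\<Sum>p\<in>G. (Hdiag d Hx p * J p * a p) * (u' s p * u' s p))) has_real_derivative
      (\<Sum>p\<in>G. (Hdiag d Hx p * J p * a p) * (u'' t p * u' t p))) (at t)"
    using dv by (rule half_weighted_sum_squares_has_derivative)
  have potential: "((\<lambda>s. 1/2 * (\<Sum>p\<in>G. (Hdiag d Hx p * (J p * b p)) * (Dx d N D K i (u s) p * Dx d N D K i (u s) p)))
      has_real_derivative
      (\<Sum>p\<in>G. (Hdiag d Hx p * (J p * b p)) * (Dx d N D K i (u' t) p * Dx d N D K i (u t) p))) (at t)" for i
    using Dx_has_derivative[OF du] by (intro half_weighted_sum_squares_has_derivative) blast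
  have remainder: "((\<lambda>s. 1/2 * qf G (u s) (Rdir d N Hx R k (eta d K J b k)) (u s)) has_real_derivative
      qf G (u' t) (Rdir d N Hx R k (eta d K J b k)) (u t)) (at t)" if "k \<in> {..<d}" for k
    using pos that
    by (intro DERIV_cong[OF DERIV_cmult[OF qf_Rdir_has_derivative[OF _ _ du]]] ballI eta_nonneg) auto
  show ?thesis
    unfolding energy_eq[OF pos]
    by (rule DERIV_add[OF DERIV_add[OF kinetic DERIV_sum[OF potential]] DERIV_sum[OF remainder]])
qed

lemma energy_rate:
  assumes pos: "\<forall>p\<in>G. 0 < J p \<and> 0 < a p \<and> 0 < b p"
    and gam: "\<forall>f\<in>faces d. \<forall>p\<in>facepts d N f. 0 < gam f p"
    and du: "\<forall>p\<in>G. ((\<lambda>s. u s p) has_real_derivative u' t p) (at t)"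
    and dv: "\<forall>p\<in>G. ((\<lambda>s. u' s p) has_real_derivative u'' t p) (at t)"
    and scheme: "\<forall>p\<in>G. J p * a p * u'' t p = scheme_rhs d N D Dxx K J b (u t) p + SAT p"
  shows "((\<lambda>s. energy d N Hx D R K J a b (u s) (u' s)) has_real_derivative
           bformP d N Hx gam (\<lambda>f. u' t) (\<lambda>f p. b p * Dn d N D Dh K J gam f (u t) p)
           + qf G (u' t) (kall d Hx) SAT) (at t)"
proof -
  have kinetic: "(\<Sum>p\<in>G. (Hdiag d Hx p * J p * a p) * (u'' t p * u' t p))
     = (\<Sum>p\<in>G. Hdiag d Hx p * u' t p * scheme_rhs d N D Dxx K J b (u t) p) + qf G (u' t) (kall d Hx) SAT"
  proof -
    have "(Hdiag d Hx p * J p * a p) * (u'' t p * u' t p)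
        = Hdiag d Hx p * u' t p * scheme_rhs d N D Dxx K J b (u t) p + u' t p * Hdiag d Hx p * SAT p"
      if "p \<in> G" for p
    proof -
      have "(Hdiag d Hx p * J p * a p) * (u'' t p * u' t p) = Hdiag d Hx p * u' t p * (J p * a p * u'' t p)"
        by (simp add: mult_ac)
      also have "\<dots> = Hdiag d Hx p * u' t p * (scheme_rhs d N D Dxx K J b (u t) p + SAT p)"
        using scheme that by simp
      finally show ?thesis by (simp add: algebra_simps)
    qed
    then show ?thesis by (simp add: sum.distrib qf_kall)
  qed
  have green: "(\<Sum>p\<in>G. Hdiag d Hx p * u' t p * scheme_rhs d N D Dxx K J b (u t) p)
     = - (\<Sum>i<d. \<Sum>p\<in>G. Hdiag d Hx p * (J p * b p) * (Dx d N D K i (u' t) p * Dx d N D K i (u t) p))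
       - (\<Sum>k<d. qf G (u' t) (Rdir d N Hx R k (eta d K J b k)) (u t))
       + bformP d N Hx gam (\<lambda>f. u' t) (\<lambda>f p. b p * Dn d N D Dh K J gam f (u t) p)"
    using green_identity[of "u' t" K J b "u t"] bdry_diff_bflux_eq_bformP[OF gam, of "u' t" K J b "u t"]
    by simp
  show ?thesis
    using energy_deriv[where u = u and u' = u' and u'' = u'' and t = t and K = K, OF pos du dv]
    unfolding kinetic green by simp
qed

lemma energy_conserved_neumann:
  assumes pos: "\<forall>p\<in>G. 0 < J p \<and> 0 < a p \<and> 0 < b p"
    and gam: "\<forall>f\<in>faces d. \<forall>p\<in>facepts d N f. 0 < gam f p"
    and du: "\<forall>p\<in>G. ((\<lambda>s. u s p) has_real_derivative u' t p) (at t)"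
    and dv: "\<forall>p\<in>G. ((\<lambda>s. u' s p) has_real_derivative u'' t p) (at t)"
    and scheme: "\<forall>p\<in>G. J p * a p * u'' t p
                       = scheme_rhs d N D Dxx K J b (u t) p + sat_neumann d N Hx D Dh K J b gam (u t) p"
  shows "((\<lambda>s. energy d N Hx D R K J a b (u s) (u' s)) has_real_derivative 0) (at t)"
  using energy_rate[where u' = u' and u'' = u'' and t = t, OF pos gam du dv scheme]
  by (simp add: qf_sat_neumann)

end

lemma sbp_norm_diag_pos:
  assumes "2 \<le> N" and "h = 1 / (real N - 1)" and "sbp_norm N h Hx"
  shows "\<And>k l. k < N \<Longrightarrow> l < N \<Longrightarrow> k \<noteq> l \<Longrightarrow> Hx k l = 0"
    and "\<And>k. k < N \<Longrightarrow> 0 < Hx k k"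
proof -
  obtain s w where "\<forall>k<s. (0::real) < w k"
    and H: "\<forall>k<N. \<forall>l<N. Hx k l = (if k = l then h * (if k < s then w k
                                           else if N - 1 - k < s then w (N - 1 - k) else 1)
                               else 0)"
    using assms(3) unfolding sbp_norm_def by blast
  moreover have "0 < h" using assms(1,2) by simp
  ultimately show "\<And>k l. k < N \<Longrightarrow> l < N \<Longrightarrow> k \<noteq> l \<Longrightarrow> Hx k l = 0" "\<And>k. k < N \<Longrightarrow> 0 < Hx k k"
    by auto
qed

theorem mainTheorem1:
  fixes d N :: nat and h :: real
    and Hx D Dh :: mat1
    and Dxx R :: "(nat \<Rightarrow> real) \<Rightarrow> mat1"
    and K :: "nat \<Rightarrow> nat \<Rightarrow> gfun" and J a b :: gfun and gam :: "face \<Rightarrow> gfun"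
  assumes "1 \<le> d" and "2 \<le> N" and "h = 1 / (real N - 1)"
    and "sbp_norm N h Hx"
    and "sbp_first N Hx D"
    and "sbp_second N Hx D Dh Dxx R"
    and "rem_linear N R" and "rem_psd N R"
    and "\<forall>p\<in>grid d N. 0 < J p \<and> 0 < a p \<and> 0 < b p"
    and "\<forall>f\<in>faces d. \<forall>p\<in>facepts d N f. 0 < gam f p"
  shows
    "(\<forall>(u :: real \<Rightarrow> gfun) u' u'' (SAT :: real \<Rightarrow> gfun).
        (\<forall>p\<in>grid d N. \<forall>t. ((\<lambda>s. u s p) has_real_derivative u' t p) (at t)
                        \<and> ((\<lambda>s. u' s p) has_real_derivative u'' t p) (at t)
                        \<and> isCont (\<lambda>s. u'' s p) t)
      \<and> (\<forall>t. \<forall>p\<in>grid d N. J p * a p * u'' t p = scheme_rhs d N D Dxx K J b (u t) p + SAT t p)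
      \<longrightarrow> (\<forall>t. ((\<lambda>s. energy d N Hx D R K J a b (u s) (u' s)) has_real_derivative
                 (bformP d N Hx gam (\<lambda>f. u' t) (\<lambda>f p. b p * Dn d N D Dh K J gam f (u t) p)
                  + qf (grid d N) (u' t) (kall d Hx) (SAT t))) (at t)))
   \<and> (\<forall>(u :: real \<Rightarrow> gfun) u' u''.
        (\<forall>p\<in>grid d N. \<forall>t. ((\<lambda>s. u s p) has_real_derivative u' t p) (at t)
                        \<and> ((\<lambda>s. u' s p) has_real_derivative u'' t p) (at t)
                        \<and> isCont (\<lambda>s. u'' s p) t)
      \<and> (\<forall>t. \<forall>p\<in>grid d N. J p * a p * u'' t p = scheme_rhs d N D Dxx K J b (u t) p
                                   + sat_neumann d N Hx D Dh K J b gam (u t) p)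
      \<longrightarrow> (\<forall>t. ((\<lambda>s. energy d N Hx D R K J a b (u s) (u' s)) has_real_derivative 0) (at t)))
   \<and> (\<forall>u v. 0 \<le> energy d N Hx D R K J a b u v)"
proof -
  interpret diag_sbp d N Hx D Dh Dxx R
    using assms sbp_norm_diag_pos[OF assms(2-4)] by unfold_locales auto
  show ?thesis
    by (intro conjI allI impI energy_rate[OF assms(9,10)] energy_conserved_neumann[OF assms(9,10)]
          energy_nonneg[OF assms(9)]) auto
qed

end
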